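(* Let $q:\mathbb{D}\to\mathbb{C}$, $q(z)=\frac{|1-z|^2}{1-|z|^2}$, and let $g,\tilde g$ be entire functions. Then for all $n\ge0$ and $z\in\mathbb{D}$, $$D^n(g\circ q)(z)=(-1)^n\frac{(1-\bar z)^{2n}}{(1-|z|^2)^n}(g^{(n)}\circ q)(z),\qquad \overline{D}^n(g\circ q)(z)=(-1)^n\frac{(1-z)^{2n}}{(1-|z|^2)^n}(g^{(n)}\circ q)(z),$$ and consequently $\overline{D}^n(g\circ q)\,D^n(\tilde g\circ q)=q^{2n}\,(g^{(n)}\circ q)\,(\tilde g^{(n)}\circ q)$.
   Context: $\mathbb{D}=\{z\in\mathbb{C}:|z|<1\}$. Peschl–Minda derivatives: for $z\in\mathbb{D}$ let $T_z(u)=(z+u)/(1+\bar z u)$; with $\partial=\frac12(\partial_x-i\partial_y)$ the Wirtinger derivative, for smooth $f:\mathbb{D}\to\mathbb{C}$ set $D^nf(z):=\partial_u^n(f\circ T_z)(0)$ and $\overline{D}^nf(z):=\overline{D^n(\bar f)(z)}$. (One has $D^{n+1}f(z)=(1-|z|^2)\,\partial^{n+1}\big[(1-|z|^2)^nf(z)\big]$.) *)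

theory Defs
  imports "HOL-Complex_Analysis.Complex_Analysis"
begin

definition wirtinger :: "(complex \<Rightarrow> complex) \<Rightarrow> complex \<Rightarrow> complex" where
  "wirtinger f z =
     (vector_derivative (\<lambda>t::real. f (z + of_real t)) (at 0)
      - \<i> * vector_derivative (\<lambda>t::real. f (z + \<i> * of_real t)) (at 0)) / 2"

definition disc_aut :: "complex \<Rightarrow> complex \<Rightarrow> complex" where
  "disc_aut z u = (z + u) / (1 + cnj z * u)"

definition PM_D :: "nat \<Rightarrow> (complex \<Rightarrow> complex) \<Rightarrow> complex \<Rightarrow> complex" where
  "PM_D n f z = (wirtinger ^^ n) (\<lambda>u. f (disc_aut z u)) 0"

definition PM_Dbar :: "nat \<Rightarrow> (complex \<Rightarrow> complex) \<Rightarrow> complex \<Rightarrow> complex" where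
  "PM_Dbar n f z = cnj (PM_D n (\<lambda>w. cnj (f w)) z)"

definition qfun :: "complex \<Rightarrow> complex" where
  "qfun z = of_real ((cmod (1 - z))\<^sup>2 / (1 - (cmod z)\<^sup>2))"

end

(*
  Put v = conj u and regard u, v as independent variables. Each function occurring in the
  iterated Wirtinger derivatives of g \<circ> q \<circ> T_z is of the form u \<mapsto> f (u, conj u) with f
  holomorphic on the bidisc, and the Wirtinger derivative of such a function is the partial
  derivative of f in its first variable, evaluated at (u, conj u). Since
  q (T_z u) = \<Phi> (u, conj u) with \<Phi> (u, v) = (a - conj a u)(conj a - a v) / ((1 - |z|^2)(1 - u v))
  and a = 1 - z, the n-th Peschl-Minda derivative at z is the n-th derivative at 0 of
  s \<mapsto> g (\<Phi> (s, 0)). As \<Phi> (s, 0) = q z - (conj a)^2 s / (1 - |z|^2) is affine in s, this gives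
  the formula for D^n. The formula for the conjugate derivative follows by applying it to the
  entire function w \<mapsto> conj (g (conj w)), because q is real-valued; the product formula is then
  algebra, using q z = |1 - z|^2 / (1 - |z|^2).
*)
theory Submission
  imports Defs
begin

lemma one_minus_mult_neq_0:
  fixes x y :: complex
  assumes "cmod x < 1" "cmod y < 1"
  shows "1 - x * y \<noteq> 0"
proof
  assume "1 - x * y = 0"
  then have "cmod x * cmod y = 1"
    by (metis norm_mult norm_one right_minus_eq)
  moreover have "cmod x * cmod y < 1"
    using assms by (metis mult_le_one less_eq_real_def mult_less_cancel_right1 norm_ge_zero not_less)
  ultimately show False
    by simp
qed

definition bidisc :: "(complex \<times> complex) set" where
  "bidisc = ball 0 1 \<times> ball 0 1"

definition deriv_fst :: "(complex \<times> complex \<Rightarrow> complex) \<Rightarrow> complex \<times> complex \<Rightarrow> complex" where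
  "deriv_fst f p = deriv (\<lambda>s. f (s, snd p)) (fst p)"

abbreviation has_partials ::
    "(complex \<times> complex \<Rightarrow> complex) \<Rightarrow> complex \<Rightarrow> complex \<Rightarrow> complex \<times> complex \<Rightarrow> bool"
  where "has_partials f A B p \<equiv> (f has_derivative (\<lambda>q. A * fst q + B * snd q)) (at p)"

lemma deriv_fst_eqI:
  assumes "has_partials f A B p"
  shows "deriv_fst f p = A"
proof -
  have "((\<lambda>s. (s, snd p)) has_derivative (\<lambda>h. (h, 0))) (at (fst p))"
    by (auto intro!: derivative_eq_intros)
  moreover have "has_partials f A B (fst p, snd p)"
    using assms by simp
  ultimately have "((\<lambda>s. f (s, snd p)) has_derivative (\<lambda>h. A * h)) (at (fst p))"
    by (rule has_derivative_eq_rhs[OF has_derivative_compose]) (simp add: fun_eq_iff)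
  then show ?thesis
    unfolding deriv_fst_def by (intro DERIV_imp_deriv) (simp add: has_field_derivative_def)
qed

lemma higher_deriv_fst: "(deriv_fst ^^ n) f p = (deriv ^^ n) (\<lambda>s. f (s, snd p)) (fst p)"
  by (induction n arbitrary: p) (simp_all add: deriv_fst_def)

text \<open>
  Instead of developing holomorphy in two variables,
  the class is generated by just enough building blocks to express q \<circ> T_z, so that closure under
  the partial derivative in u follows by rule induction. The rule \<open>cong\<close> lets membership depend
  only on the values on the bidisc, where 1 - u v does not vanish.
\<close>
inductive_set hol_bidisc :: "(complex \<times> complex \<Rightarrow> complex) set" where
  const: "(\<lambda>p. c) \<in> hol_bidisc"
| fst: "fst \<in> hol_bidisc"
| snd: "snd \<in> hol_bidisc"
| inverse_one_minus_mult: "(\<lambda>p. 1 / (1 - fst p * snd p)) \<in> hol_bidisc"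
| add: "f \<in> hol_bidisc \<Longrightarrow> h \<in> hol_bidisc \<Longrightarrow> (\<lambda>p. f p + h p) \<in> hol_bidisc"
| mult: "f \<in> hol_bidisc \<Longrightarrow> h \<in> hol_bidisc \<Longrightarrow> (\<lambda>p. f p * h p) \<in> hol_bidisc"
| compose: "f \<in> hol_bidisc \<Longrightarrow> G holomorphic_on UNIV \<Longrightarrow> (\<lambda>p. G (f p)) \<in> hol_bidisc"
| cong: "f \<in> hol_bidisc \<Longrightarrow> (\<And>p. p \<in> bidisc \<Longrightarrow> f p = h p) \<Longrightarrow> h \<in> hol_bidisc"

lemma hol_bidisc_diff:
  assumes "f \<in> hol_bidisc" "h \<in> hol_bidisc"
  shows "(\<lambda>p. f p - h p) \<in> hol_bidisc"
proof (rule hol_bidisc.cong)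
  show "(\<lambda>p. f p + (-1) * h p) \<in> hol_bidisc"
    using assms by (intro hol_bidisc.add hol_bidisc.mult hol_bidisc.const)
qed simp

lemma has_partials_inverse_one_minus_mult:
  fixes p :: "complex \<times> complex"
  defines "w \<equiv> \<lambda>p. 1 / (1 - fst p * snd p)"
  assumes "1 - fst p * snd p \<noteq> 0"
  shows "has_partials w (snd p * w p ^ 2) (fst p * w p ^ 2) p"
proof -
  have "((\<lambda>p. 1 - fst p * snd p) has_derivative (\<lambda>q. - (snd p * fst q + fst p * snd q))) (at p)"
    by (auto intro!: derivative_eq_intros simp: algebra_simps)
  with assms(2) show ?thesis
    unfolding w_def
    by (intro has_derivative_eq_rhs[OF has_derivative_divide[OF has_derivative_const]])
      (auto simp: fun_eq_iff divide_inverse power2_eq_square algebra_simps)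
qed

lemma hol_bidisc_has_partials:
  assumes "f \<in> hol_bidisc"
  shows "\<exists>f1 f2. f1 \<in> hol_bidisc \<and> (\<forall>p\<in>bidisc. has_partials f (f1 p) (f2 p) p)"
  using assms
proof induction
  case (const c)
  show ?case by (intro exI[of _ "\<lambda>p. 0"]) (auto intro: hol_bidisc.const)
next
  case fst
  show ?case
    by (intro exI[of _ "\<lambda>p. 1"] exI[of _ "\<lambda>p. 0"]) (auto intro!: hol_bidisc.const derivative_eq_intros)
next
  case snd
  show ?case
    by (intro exI[of _ "\<lambda>p. 0"] exI[of _ "\<lambda>p. 1"]) (auto intro!: hol_bidisc.const derivative_eq_intros)
next
  case inverse_one_minus_mult
  show ?case
  proof (intro exI conjI ballI)
    show "(\<lambda>p. snd p * (1 / (1 - fst p * snd p)) ^ 2) \<in> hol_bidisc"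
      unfolding power2_eq_square
      by (intro hol_bidisc.mult hol_bidisc.snd hol_bidisc.inverse_one_minus_mult)
    fix p assume "p \<in> bidisc"
    then have "1 - fst p * snd p \<noteq> 0"
      by (intro one_minus_mult_neq_0) (auto simp: bidisc_def mem_Times_iff)
    then show "has_partials (\<lambda>p. 1 / (1 - fst p * snd p))
        (snd p * (1 / (1 - fst p * snd p)) ^ 2) (fst p * (1 / (1 - fst p * snd p)) ^ 2) p"
      by (rule has_partials_inverse_one_minus_mult)
  qed
next
  case (add f h)
  then obtain f1 f2 h1 h2 where "f1 \<in> hol_bidisc" "h1 \<in> hol_bidisc"
    and f: "\<forall>p\<in>bidisc. has_partials f (f1 p) (f2 p) p"
    and h: "\<forall>p\<in>bidisc. has_partials h (h1 p) (h2 p) p"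
    by blast
  show ?case
  proof (intro exI conjI ballI)
    show "(\<lambda>p. f1 p + h1 p) \<in> hol_bidisc" by (intro hol_bidisc.add) fact+
    fix p assume p: "p \<in> bidisc"
    from has_derivative_add[OF f[rule_format, OF p] h[rule_format, OF p]]
    show "has_partials (\<lambda>p. f p + h p) (f1 p + h1 p) (f2 p + h2 p) p"
      by (rule has_derivative_eq_rhs) (simp add: fun_eq_iff algebra_simps)
  qed
next
  case (mult f h)
  then obtain f1 f2 h1 h2 where "f1 \<in> hol_bidisc" "h1 \<in> hol_bidisc"
    and f: "\<forall>p\<in>bidisc. has_partials f (f1 p) (f2 p) p"
    and h: "\<forall>p\<in>bidisc. has_partials h (h1 p) (h2 p) p"
    by blast
  show ?case
  proof (intro exI conjI ballI)
    show "(\<lambda>p. f p * h1 p + f1 p * h p) \<in> hol_bidisc"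
      by (intro hol_bidisc.add hol_bidisc.mult) fact+
    fix p assume p: "p \<in> bidisc"
    from has_derivative_mult[OF f[rule_format, OF p] h[rule_format, OF p]]
    show "has_partials (\<lambda>p. f p * h p) (f p * h1 p + f1 p * h p) (f p * h2 p + f2 p * h p) p"
      by (rule has_derivative_eq_rhs) (simp add: fun_eq_iff algebra_simps)
  qed
next
  case (compose f G)
  then obtain f1 f2 where f1: "f1 \<in> hol_bidisc"
    and f: "\<forall>p\<in>bidisc. has_partials f (f1 p) (f2 p) p"
    by blast
  have G': "(G has_derivative (\<lambda>x. deriv G y * x)) (at y)" for y
    using holomorphic_derivI[OF compose.hyps(2) open_UNIV, of y UNIV]
    by (simp add: has_field_derivative_def)
  show ?case
  proof (intro exI conjI ballI)
    show "(\<lambda>p. deriv G (f p) * f1 p) \<in> hol_bidisc"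
      using hol_bidisc.compose[OF compose.hyps(1) holomorphic_deriv[OF compose.hyps(2)]] f1
      by (intro hol_bidisc.mult) auto
    fix p assume "p \<in> bidisc"
    from has_derivative_compose[OF f[rule_format, OF this] G']
    show "has_partials (\<lambda>p. G (f p)) (deriv G (f p) * f1 p) (deriv G (f p) * f2 p) p"
      by (simp add: algebra_simps)
  qed
next
  case (cong f h)
  then obtain f1 f2 where "f1 \<in> hol_bidisc"
    and f: "\<forall>p\<in>bidisc. has_partials f (f1 p) (f2 p) p"
    by blast
  have "open bidisc"
    unfolding bidisc_def by (intro open_Times) auto
  show ?case
  proof (intro exI conjI ballI)
    fix p assume p: "p \<in> bidisc"
    show "has_partials h (f1 p) (f2 p) p"
      by (rule has_derivative_transform_within_open[OF f[rule_format, OF p] \<open>open bidisc\<close> p])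
        (use cong.hyps(2) in auto)
  qed fact
qed

lemma hol_bidisc_has_partials_at:
  assumes "f \<in> hol_bidisc" "p \<in> bidisc"
  obtains B where "has_partials f (deriv_fst f p) B p"
proof -
  obtain f1 f2 where "\<forall>p\<in>bidisc. has_partials f (f1 p) (f2 p) p"
    using hol_bidisc_has_partials[OF assms(1)] by blast
  with assms(2) have "has_partials f (f1 p) (f2 p) p" by blast
  with that show ?thesis using deriv_fst_eqI by metis
qed

lemma hol_bidisc_deriv_fst:
  assumes "f \<in> hol_bidisc"
  shows "deriv_fst f \<in> hol_bidisc"
proof -
  obtain f1 f2 where "f1 \<in> hol_bidisc"
    and "\<forall>p\<in>bidisc. has_partials f (f1 p) (f2 p) p"
    using hol_bidisc_has_partials[OF assms] by blast
  then show ?thesis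
    by (elim hol_bidisc.cong) (metis deriv_fst_eqI)
qed

lemma hol_bidisc_higher_deriv_fst: "f \<in> hol_bidisc \<Longrightarrow> (deriv_fst ^^ n) f \<in> hol_bidisc"
  by (induction n) (simp_all add: hol_bidisc_deriv_fst)

lemma wirtinger_cong:
  assumes "open S" "w \<in> S" "\<And>u. u \<in> S \<Longrightarrow> F u = G u"
  shows "wirtinger F w = wirtinger G w"
proof -
  obtain e where e: "e > 0" "ball w e \<subseteq> S" using assms(1,2) openE by blast
  have "vector_derivative (\<lambda>t::real. F (w + c * of_real t)) (at 0)
      = vector_derivative (\<lambda>t::real. G (w + c * of_real t)) (at 0)" if "cmod c = 1" for c
  proof (rule vector_derivative_cong_eq)
    have "eventually (\<lambda>t::real. t \<in> ball 0 e) (nhds 0)"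
      using e(1) by (intro eventually_nhds_in_open) auto
    then show "\<forall>\<^sub>F t in nhds 0. t \<in> UNIV \<longrightarrow> F (w + c * of_real t) = G (w + c * of_real t)"
      by eventually_elim (use that e(2) assms(3) in \<open>auto simp: dist_norm norm_mult subset_iff\<close>)
  qed auto
  from this[of 1] this[of \<i>] show ?thesis unfolding wirtinger_def by simp
qed

lemma wirtinger_diagonal:
  assumes "has_partials f A B (w, cnj w)"
  shows "wirtinger (\<lambda>u. f (u, cnj u)) w = A"
proof -
  have "((\<lambda>t::real. f (w + c * of_real t, cnj w + cnj c * of_real t)) has_vector_derivative
      c * A + cnj c * B) (at 0)" for c
  proof -
    have "((\<lambda>t::real. (w + c * of_real t, cnj w + cnj c * of_real t)) has_derivative
        (\<lambda>t. (c * of_real t, cnj c * of_real t))) (at 0)"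
      by (auto intro!: derivative_eq_intros)
    moreover have "has_partials f A B (w + c * of_real 0, cnj w + cnj c * of_real 0)"
      using assms by simp
    ultimately show ?thesis
      unfolding has_vector_derivative_def
      by (rule has_derivative_eq_rhs[OF has_derivative_compose])
        (simp add: fun_eq_iff scaleR_conv_of_real algebra_simps)
  qed
  from this[of 1] this[of \<i>] show ?thesis
    unfolding wirtinger_def by (simp add: vector_derivative_at algebra_simps)
qed

lemma higher_wirtinger_diagonal:
  assumes "f \<in> hol_bidisc" "\<And>u. u \<in> ball 0 1 \<Longrightarrow> F u = f (u, cnj u)" "w \<in> ball 0 1"
  shows "(wirtinger ^^ n) F w = (deriv_fst ^^ n) f (w, cnj w)"
  using assms(3)
proof (induction n arbitrary: w)
  case 0
  then show ?case using assms(2) by simp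
next
  case (Suc n)
  have "(wirtinger ^^ Suc n) F w = wirtinger ((wirtinger ^^ n) F) w"
    by simp
  also have "\<dots> = wirtinger (\<lambda>u. (deriv_fst ^^ n) f (u, cnj u)) w"
    by (rule wirtinger_cong[OF open_ball Suc.prems]) (rule Suc.IH)
  also obtain B
    where "has_partials ((deriv_fst ^^ n) f) ((deriv_fst ^^ Suc n) f (w, cnj w)) B (w, cnj w)"
    using hol_bidisc_has_partials_at[OF hol_bidisc_higher_deriv_fst[OF assms(1)], of "(w, cnj w)" n]
      Suc.prems
    by (auto simp: bidisc_def)
  then have "wirtinger (\<lambda>u. (deriv_fst ^^ n) f (u, cnj u)) w = (deriv_fst ^^ Suc n) f (w, cnj w)"
    by (rule wirtinger_diagonal)
  finally show ?case .
qed

lemma qfun_eq: "qfun w = (1 - w) * cnj (1 - w) / (1 - w * cnj w)"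
  unfolding qfun_def by (simp only: of_real_divide of_real_diff of_real_1 complex_norm_square)

lemma qfun_disc_aut:
  assumes "cmod z < 1" "cmod u < 1"
  shows "qfun (disc_aut z u) = ((1 - z) - cnj (1 - z) * u) * (cnj (1 - z) - (1 - z) * cnj u)
    / ((1 - z * cnj z) * (1 - u * cnj u))"
proof -
  define T A C where "T = disc_aut z u" and "A = (1 - z) - cnj (1 - z) * u"
    and "C = (1 - z * cnj z) * (1 - u * cnj u)"
  have d: "1 + cnj z * u \<noteq> 0" "1 + z * cnj u \<noteq> 0"
    using one_minus_mult_neq_0[of "- cnj z" u] one_minus_mult_neq_0[of "- z" "cnj u"] assms
    by simp_all
  have "1 - T = A / (1 + cnj z * u)"
    using d by (simp add: T_def A_def disc_aut_def field_simps)
  moreover from this have "cnj (1 - T) = cnj A / (1 + z * cnj u)"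
    by simp
  moreover have "1 - T * cnj T = C / ((1 + cnj z * u) * (1 + z * cnj u))"
  proof -
    have "(1 + cnj z * u) * (1 + z * cnj u) - (z + u) * (cnj z + cnj u) = C"
      by (simp add: C_def algebra_simps)
    then show ?thesis
      using d by (simp add: T_def disc_aut_def divide_simps)
  qed
  ultimately have "qfun T = A * cnj A / C"
    using d by (simp add: qfun_eq)
  then show ?thesis
    by (simp add: T_def A_def C_def)
qed

lemma PM_D_comp_qfun:
  assumes G: "G holomorphic_on UNIV" and z: "cmod z < 1"
  shows "PM_D n (G \<circ> qfun) z = (- (cnj (1 - z) ^ 2) / (1 - z * cnj z)) ^ n * (deriv ^^ n) G (qfun z)"
proof -
  define a c where "a = 1 - z" and "c = 1 - z * cnj z"
  define \<Phi> where "\<Phi> p = (a - cnj a * fst p) * (cnj a - a * snd p) / (c * (1 - fst p * snd p))" for p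
  have "c \<noteq> 0"
    using one_minus_mult_neq_0[of z "cnj z"] z by (simp add: c_def)
  have "(\<lambda>p. G (\<Phi> p)) \<in> hol_bidisc"
  proof (rule hol_bidisc.compose[OF hol_bidisc.cong G])
    show "(\<lambda>p. 1 / c * ((a - cnj a * fst p) * ((cnj a - a * snd p) * (1 / (1 - fst p * snd p)))))
        \<in> hol_bidisc"
      by (intro hol_bidisc.mult hol_bidisc_diff hol_bidisc.const hol_bidisc.fst hol_bidisc.snd
          hol_bidisc.inverse_one_minus_mult)
  qed (simp add: \<Phi>_def)
  then have "(wirtinger ^^ n) (\<lambda>u. (G \<circ> qfun) (disc_aut z u)) 0
      = (deriv_fst ^^ n) (\<lambda>p. G (\<Phi> p)) (0, cnj 0)"
    by (rule higher_wirtinger_diagonal) (auto simp: qfun_disc_aut z \<Phi>_def a_def c_def)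
  also have "\<dots> = (deriv ^^ n) (\<lambda>s. G (\<Phi> (s, 0))) 0"
    by (simp add: higher_deriv_fst)
  also have "(\<lambda>s. G (\<Phi> (s, 0))) = (\<lambda>s. G (- (cnj a ^ 2) / c * s + qfun z))"
  proof -
    have "qfun z = a * cnj a / c"
      by (simp add: qfun_eq a_def c_def)
    with \<open>c \<noteq> 0\<close> show ?thesis
      by (simp add: \<Phi>_def field_simps power2_eq_square)
  qed
  also have "(deriv ^^ n) \<dots> 0 = (- (cnj a ^ 2) / c) ^ n * (deriv ^^ n) G (qfun z)"
    using higher_deriv_compose_linear'[OF G open_UNIV open_UNIV, of 0 "- (cnj a ^ 2) / c" "qfun z" n]
    by simp
  finally show ?thesis
    by (simp add: PM_D_def a_def c_def)
qed

lemma power_neg_square_divide: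
  fixes x c :: "'a :: field"
  shows "(- (x ^ 2) / c) ^ n = (-1) ^ n * x ^ (2 * n) / c ^ n"
proof -
  have "(- (x ^ 2) / c) ^ n = ((-1) * x ^ 2) ^ n / c ^ n"
    by (simp only: mult_minus1 power_divide)
  then show ?thesis
    by (simp only: power_mult_distrib power_mult)
qed

lemma higher_deriv_cnj_cnj:
  assumes "G holomorphic_on UNIV"
  shows "(deriv ^^ n) (cnj \<circ> G \<circ> cnj) = cnj \<circ> (deriv ^^ n) G \<circ> cnj"
proof (induction n)
  case (Suc n)
  have "(cnj \<circ> (deriv ^^ n) G \<circ> cnj has_field_derivative cnj (deriv ((deriv ^^ n) G) (cnj w))) (at w)"
    for w
    using has_field_derivative_cnj_cnj[OF holomorphic_derivI[OF
        holomorphic_higher_deriv[OF assms open_UNIV] open_UNIV UNIV_I]] .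
  then have "deriv (cnj \<circ> (deriv ^^ n) G \<circ> cnj) = cnj \<circ> (deriv ^^ Suc n) G \<circ> cnj"
    by (intro ext) (simp add: DERIV_imp_deriv)
  with Suc.IH show ?case
    by (simp add: comp_def)
qed simp

lemma PM_Dbar_comp_qfun:
  assumes G: "G holomorphic_on UNIV" and z: "cmod z < 1"
  shows "PM_Dbar n (G \<circ> qfun) z = (- ((1 - z) ^ 2) / (1 - z * cnj z)) ^ n * (deriv ^^ n) G (qfun z)"
proof -
  have real: "cnj (qfun w) = qfun w" for w
    by (simp add: qfun_def)
  have "cnj \<circ> G \<circ> cnj holomorphic_on UNIV"
    using holomorphic_on_compose_cnj_cnj[of G UNIV] G by (simp add: image_cnj_conv_vimage_cnj)
  moreover have "(\<lambda>w. cnj ((G \<circ> qfun) w)) = (cnj \<circ> G \<circ> cnj) \<circ> qfun"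
    by (simp add: fun_eq_iff real)
  ultimately have "PM_Dbar n (G \<circ> qfun) z
      = cnj ((- (cnj (1 - z) ^ 2) / (1 - z * cnj z)) ^ n * (deriv ^^ n) (cnj \<circ> G \<circ> cnj) (qfun z))"
    by (simp add: PM_Dbar_def PM_D_comp_qfun z)
  then show ?thesis
    by (simp add: higher_deriv_cnj_cnj[OF G] real mult.commute)
qed

theorem mainTheorem15:
  fixes g g' :: "complex \<Rightarrow> complex" and n :: nat and z :: complex
  assumes "g holomorphic_on UNIV" and "g' holomorphic_on UNIV"
    and "z \<in> ball 0 1"
  shows "PM_D n (g \<circ> qfun) z
           = (-1) ^ n * (1 - cnj z) ^ (2 * n) / of_real ((1 - (cmod z)\<^sup>2) ^ n)
             * (deriv ^^ n) g (qfun z)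
       \<and> PM_Dbar n (g \<circ> qfun) z
           = (-1) ^ n * (1 - z) ^ (2 * n) / of_real ((1 - (cmod z)\<^sup>2) ^ n)
             * (deriv ^^ n) g (qfun z)
       \<and> PM_Dbar n (g \<circ> qfun) z * PM_D n (g' \<circ> qfun) z
           = qfun z ^ (2 * n) * (deriv ^^ n) g (qfun z) * (deriv ^^ n) g' (qfun z)"
proof -
  have z: "cmod z < 1"
    using assms(3) by simp
  define c where "c = 1 - z * cnj z"
  have "complex_of_real (1 - (cmod z)\<^sup>2) = c"
    by (simp only: c_def of_real_diff of_real_1 complex_norm_square)
  then have c: "complex_of_real ((1 - (cmod z)\<^sup>2) ^ n) = c ^ n"
    by (simp only: of_real_power[of "1 - (cmod z)\<^sup>2"])
  have D: "PM_D n (h \<circ> qfun) z = (-1) ^ n * (1 - cnj z) ^ (2 * n) / c ^ n * (deriv ^^ n) h (qfun z)"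
    if "h holomorphic_on UNIV" for h
    using PM_D_comp_qfun[OF that z, where n=n]
    unfolding complex_cnj_diff complex_cnj_one c_def[symmetric] power_neg_square_divide .
  have Dbar: "PM_Dbar n (h \<circ> qfun) z = (-1) ^ n * (1 - z) ^ (2 * n) / c ^ n * (deriv ^^ n) h (qfun z)"
    if "h holomorphic_on UNIV" for h
    using PM_Dbar_comp_qfun[OF that z, where n=n]
    unfolding c_def[symmetric] power_neg_square_divide .
  have "qfun z ^ (2 * n) = (1 - z) ^ (2 * n) * (1 - cnj z) ^ (2 * n) / (c ^ n * c ^ n)"
    by (simp add: qfun_eq c_def power_mult_distrib power_divide flip: power_add mult_2)
  moreover have "(-1 :: complex) ^ n * (-1) ^ n = 1"
    by (simp flip: power_mult_distrib)
  moreover have "s * A / C * X * (s * B / C * Y) = (s * s) * (A * B / (C * C)) * X * Y"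
    for s A B C X Y :: complex
    by (simp add: divide_inverse mult_ac)
  ultimately show ?thesis
    unfolding c D[OF assms(1)] D[OF assms(2)] Dbar[OF assms(1)] by simp
qed

end
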